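(* Fix any $\delta\ge 0$ and define the event \[\mathcal E_\delta=\left\{\sum_{i=1}^n\left[\log\left(\frac{P_j(\mathbf X_{ij}\mid \mathbf X_{i,-j})\,Q_j(\tilde{\mathbf X}_{ij}\mid \mathbf X_{i,-j})}{Q_j(\mathbf X_{ij}\mid \mathbf X_{i,-j})\,P_j(\tilde{\mathbf X}_{ij}\mid \mathbf X_{i,-j})}\right)\right]^2\le n\delta^2\text{ for all } j=1,\dots,p\right\}.\] Then \[\mathbb{P}\left(\max_{j=1,\dots,p}\widehat{\mathrm{KL}}_j\le\frac{n\delta^2}{2}+2\delta\sqrt{n\log(p)}\right)\ge 1-\frac1p-\mathbb{P}\big((\mathcal E_\delta)^c\big).\]
   Context: Setting: $X\in\mathbb{R}^p$ has distribution $P_X$; for $x\in\mathbb{R}^p$, $x_{-j}$ is $x$ with coordinate $j$ removed. Each $X_j$ is discrete or continuous, $P_j(\cdot\mid x_{-j})$ is the true conditional pmf/density of $X_j$ given $X_{-j}=x_{-j}$, and $Q_j(\cdot\mid x_{-j})$ is a fixed estimated conditional pmf/density of the same type with the same support. A knockoff mechanism $P_{\tilde X\mid X}(\cdot\mid x)$ (a conditional distribution on $\mathbb{R}^p$) is pairwise exchangeable with respect to $Q_j$ if for every distribution $D^{(j)}$ on $\mathbb{R}^p$ with conditional of $X_j$ given $X_{-j}$ equal to $Q_j$, drawing $X\sim D^{(j)}$, $\tilde X\mid X\sim P_{\tilde X\mid X}(\cdot\mid X)$ yields $(X_j,\tilde X_j,X_{-j},\tilde X_{-j})\overset{d}{=}(\tilde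 X_j,X_j,X_{-j},\tilde X_{-j})$; standing assumption: this holds for every $j=1,\dots,p$. Data: $\mathbf X\in\mathbb{R}^{n\times p}$ with i.i.d. rows $\mathbf X_{i,*}\sim P_X$, and $\tilde{\mathbf X}$ with rows drawn independently as $\tilde{\mathbf X}_{i,*}\sim P_{\tilde X\mid X}(\cdot\mid\mathbf X_{i,*})$. Define \[\widehat{\mathrm{KL}}_j=\sum_{i=1}^n\log\left(\frac{P_j(\mathbf X_{ij}\mid \mathbf X_{i,-j})\,Q_j(\tilde{\mathbf X}_{ij}\mid \mathbf X_{i,-j})}{Q_j(\mathbf X_{ij}\mid \mathbf X_{i,-j})\,P_j(\tilde{\mathbf X}_{ij}\mid \mathbf X_{i,-j})}\right).\] *)

theory Defs
  imports "HOL-Probability.Probability"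
begin

text \<open>Coordinates are indexed by I = {..<p}; a point of R^p is an (extensional)
  function nat => real, i.e. an element of the space of PiM I (%_. borel).
  For x in R^p, x_{-j} is represented by restrict x (I - {j}).\<close>

abbreviation Rp :: "nat \<Rightarrow> (nat \<Rightarrow> real) measure" where
  "Rp p \<equiv> PiM {..<p} (\<lambda>_. borel)"

abbreviation Rpmj :: "nat \<Rightarrow> nat \<Rightarrow> (nat \<Rightarrow> real) measure" where
  "Rpmj p j \<equiv> PiM ({..<p} - {j}) (\<lambda>_. borel)"

definition minus_coord :: "nat \<Rightarrow> nat \<Rightarrow> (nat \<Rightarrow> real) \<Rightarrow> (nat \<Rightarrow> real)" where
  "minus_coord p j x = restrict x ({..<p} - {j})"

definition counting_on :: "real set \<Rightarrow> real measure" where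
  "counting_on S = distr (count_space S) borel (\<lambda>t. t)"

definition discrete_or_continuous :: "real measure \<Rightarrow> bool" where
  "discrete_or_continuous \<nu> \<longleftrightarrow> \<nu> = lborel \<or> (\<exists>S. countable S \<and> \<nu> = counting_on S)"

text \<open>A conditional pmf/density (w.r.t. nu) of X_j given X_{-j}: f t y = f(t | y).\<close>
definition is_cond_density :: "nat \<Rightarrow> nat \<Rightarrow> real measure \<Rightarrow> (real \<Rightarrow> (nat \<Rightarrow> real) \<Rightarrow> real) \<Rightarrow> bool" where
  "is_cond_density p j \<nu> f \<longleftrightarrow>
     (\<lambda>(t, y). f t y) \<in> borel_measurable (pair_measure borel (Rpmj p j)) \<and>
     (\<forall>t y. 0 \<le> f t y) \<and>
     (\<forall>y. (\<integral>\<^sup>+ t. ennreal (f t y) \<partial>\<nu>) = 1)"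

text \<open>The distribution on R^p with X_{-j} marginal equal to that of D and conditional
  law of X_j given X_{-j} = y having density f(. | y) w.r.t. nu.\<close>
definition recombine :: "nat \<Rightarrow> nat \<Rightarrow> real measure \<Rightarrow> (real \<Rightarrow> (nat \<Rightarrow> real) \<Rightarrow> real)
    \<Rightarrow> (nat \<Rightarrow> real) measure \<Rightarrow> (nat \<Rightarrow> real) measure" where
  "recombine p j \<nu> f D =
     bind (distr D (Rpmj p j) (minus_coord p j))
          (\<lambda>y. distr (density \<nu> (\<lambda>t. ennreal (f t y))) (Rp p) (\<lambda>t. y(j := t)))"

definition has_conditional :: "nat \<Rightarrow> nat \<Rightarrow> real measure \<Rightarrow> (real \<Rightarrow> (nat \<Rightarrow> real) \<Rightarrow> real)
    \<Rightarrow> (nat \<Rightarrow> real) measure \<Rightarrow> bool" where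
  "has_conditional p j \<nu> f D \<longleftrightarrow> D = recombine p j \<nu> f D"

text \<open>Joint law of (X, tilde X) with X ~ D and tilde X | X ~ K X.\<close>
definition joint_law :: "nat \<Rightarrow> (nat \<Rightarrow> real) measure \<Rightarrow> ((nat \<Rightarrow> real) \<Rightarrow> (nat \<Rightarrow> real) measure)
    \<Rightarrow> ((nat \<Rightarrow> real) \<times> (nat \<Rightarrow> real)) measure" where
  "joint_law p D K = bind D (\<lambda>x. distr (K x) (pair_measure (Rp p) (Rp p)) (\<lambda>xt. (x, xt)))"

definition swap_coord :: "nat \<Rightarrow> (nat \<Rightarrow> real) \<times> (nat \<Rightarrow> real) \<Rightarrow> (nat \<Rightarrow> real) \<times> (nat \<Rightarrow> real)" where
  "swap_coord j z = ((fst z)(j := snd z j), (snd z)(j := fst z j))"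

definition pairwise_exchangeable :: "nat \<Rightarrow> nat \<Rightarrow> real measure \<Rightarrow> (real \<Rightarrow> (nat \<Rightarrow> real) \<Rightarrow> real)
    \<Rightarrow> ((nat \<Rightarrow> real) \<Rightarrow> (nat \<Rightarrow> real) measure) \<Rightarrow> bool" where
  "pairwise_exchangeable p j \<nu> Qj K \<longleftrightarrow>
     (\<forall>D. prob_space D \<and> sets D = sets (Rp p) \<and> has_conditional p j \<nu> Qj D \<longrightarrow>
        distr (joint_law p D K) (pair_measure (Rp p) (Rp p)) (swap_coord j) = joint_law p D K)"

definition llr :: "nat \<Rightarrow> (nat \<Rightarrow> real \<Rightarrow> (nat \<Rightarrow> real) \<Rightarrow> real) \<Rightarrow> (nat \<Rightarrow> real \<Rightarrow> (nat \<Rightarrow> real) \<Rightarrow> real)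
    \<Rightarrow> nat \<Rightarrow> (nat \<Rightarrow> real) \<Rightarrow> (nat \<Rightarrow> real) \<Rightarrow> real" where
  "llr p P Q j x xt =
     ln ((P j (x j) (minus_coord p j x) * Q j (xt j) (minus_coord p j x)) /
         (Q j (x j) (minus_coord p j x) * P j (xt j) (minus_coord p j x)))"

text \<open>widehat KL_j for data omega, omega i = (row i of X, row i of tilde X).\<close>
definition KLhat :: "nat \<Rightarrow> nat \<Rightarrow> (nat \<Rightarrow> real \<Rightarrow> (nat \<Rightarrow> real) \<Rightarrow> real) \<Rightarrow> (nat \<Rightarrow> real \<Rightarrow> (nat \<Rightarrow> real) \<Rightarrow> real)
    \<Rightarrow> nat \<Rightarrow> (nat \<Rightarrow> (nat \<Rightarrow> real) \<times> (nat \<Rightarrow> real)) \<Rightarrow> real" where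
  "KLhat p n P Q j \<omega> = (\<Sum>i<n. llr p P Q j (fst (\<omega> i)) (snd (\<omega> i)))"

end

theory Submission
  imports Defs
begin

text \<open>For a fixed coordinate \<open>j\<close>, let \<open>L\<close> be the log-likelihood ratio of one row, so that
  \<open>KLhat\<^sub>j\<close> is a sum of \<open>n\<close> i.i.d. copies of \<open>L\<close>. Applying exchangeability to the law obtained
  from \<open>P\<^sub>X\<close> by replacing the conditional of \<open>X\<^sub>j\<close> with \<open>Q\<^sub>j\<close> (with respect to which \<open>P\<^sub>X\<close> has
  density \<open>P\<^sub>j / Q\<^sub>j\<close>), swapping \<open>X\<^sub>j\<close> and \<open>X\<^sub>j\<close>'s knockoff negates \<open>L\<close> and multiplies the density
  by \<open>exp (- L)\<close>; hence \<open>E g(L) = E g(-L) exp(-L)\<close>. Together with the elementary inequality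
  \<open>tilt l u * e\<^sup>u + tilt l (-u) \<le> 1 + e\<^sup>u\<close> for \<open>tilt l u = exp (l u - (l + l\<^sup>2) u\<^sup>2 / 2)\<close>, this gives
  \<open>E tilt l L \<le> 1\<close> for all \<open>l \<ge> 0\<close>. Markov's inequality for the product of these weights over the
  rows, with \<open>l = t / V\<close>, bounds the probability that \<open>KLhat\<^sub>j > V/2 + t\<close> while
  \<open>\<Sum> L\<^sup>2 \<le> V\<close> by \<open>exp (- t\<^sup>2 / (2 V)) = 1 / p\<^sup>2\<close> for \<open>V = n \<delta>\<^sup>2\<close> and \<open>t = 2 \<delta> sqrt (n log p)\<close>;
  a union bound over \<open>j\<close> finishes the proof.\<close>

lemma sinh_le_mult_cosh:
  fixes x :: real
  assumes "0 \<le> x"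
  shows "sinh x \<le> x * cosh x"
proof -
  have "(\<lambda>x. x * cosh x - sinh x) 0 \<le> (\<lambda>x. x * cosh x - sinh x) x"
  proof (rule DERIV_nonneg_imp_nondecreasing[OF assms])
    fix y :: real
    assume "0 \<le> y"
    then show "\<exists>d. ((\<lambda>x. x * cosh x - sinh x) has_real_derivative d) (at y) \<and> 0 \<le> d"
      by (intro exI[of _ "y * sinh y"]) (auto intro!: derivative_eq_intros)
  qed
  then show ?thesis
    by simp
qed

lemma cosh_mult_exp_neg_square_antimono:
  fixes a b :: real
  assumes "0 \<le> b" "b \<le> a"
  shows "cosh a * exp (- (a\<^sup>2 / 2)) \<le> cosh b * exp (- (b\<^sup>2 / 2))"
proof -
  have "(\<lambda>x. cosh x * exp (- (x\<^sup>2 / 2))) a \<le> (\<lambda>x. cosh x * exp (- (x\<^sup>2 / 2))) b"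
  proof (rule DERIV_nonpos_imp_nonincreasing[OF assms(2)])
    fix y :: real
    assume "b \<le> y"
    then have "(sinh y - y * cosh y) * exp (- (y\<^sup>2 / 2)) \<le> 0"
      using sinh_le_mult_cosh[of y] assms(1) by (simp add: mult_nonpos_nonneg)
    moreover have "((\<lambda>x. cosh x * exp (- (x\<^sup>2 / 2))) has_real_derivative
        (sinh y - y * cosh y) * exp (- (y\<^sup>2 / 2))) (at y)"
      by (auto intro!: derivative_eq_intros simp: algebra_simps power2_eq_square)
    ultimately show "\<exists>d. ((\<lambda>x. cosh x * exp (- (x\<^sup>2 / 2))) has_real_derivative d) (at y) \<and> d \<le> 0"
      by blast
  qed
  then show ?thesis
    by simp
qed

definition tilt :: "real \<Rightarrow> real \<Rightarrow> real" where
  "tilt l u = exp (l * u - (l + l\<^sup>2) / 2 * u\<^sup>2)"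

lemma tilt_nonneg: "0 \<le> tilt l u"
  by (simp add: tilt_def)

lemma borel_measurable_tilt [measurable]: "tilt l \<in> borel_measurable borel"
  unfolding tilt_def by measurable

lemma tilt_sum: "(\<Prod>i\<in>I. tilt l (u i)) = exp (l * (\<Sum>i\<in>I. u i) - (l + l\<^sup>2) / 2 * (\<Sum>i\<in>I. (u i)\<^sup>2))"
proof (cases "finite I")
  case True
  then have "(\<Prod>i\<in>I. tilt l (u i)) = exp (\<Sum>i\<in>I. l * u i - (l + l\<^sup>2) / 2 * (u i)\<^sup>2)"
    unfolding tilt_def by (rule exp_sum[symmetric])
  then show ?thesis
    by (simp add: sum_subtractf sum_distrib_left)
qed simp

text \<open>Both sides have the form \<open>2 exp(u/2) cosh(\<cdot>)\<close>: the left one with argument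
  \<open>(l + 1/2) u\<close> and an extra factor \<open>exp (-c)\<close>, where \<open>2 c = ((l + 1/2) u)\<^sup>2 - (u/2)\<^sup>2\<close>,
  the right one with argument \<open>u/2\<close>.\<close>
lemma tilt_balance:
  assumes "0 \<le> l"
  shows "tilt l u * exp u + tilt l (- u) \<le> 1 + exp u"
proof -
  define a where "a = \<bar>(l + 1/2) * u\<bar>"
  define b where "b = \<bar>u\<bar> / 2"
  define c where "c = (l + l\<^sup>2) / 2 * u\<^sup>2"
  have "a = (l + 1/2) * \<bar>u\<bar>"
    using assms by (simp add: a_def abs_mult)
  then have "b \<le> a"
    using mult_nonneg_nonneg[OF assms abs_ge_zero[of u]] by (simp add: b_def algebra_simps)
  have c: "c = a\<^sup>2 / 2 - b\<^sup>2 / 2"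
    unfolding a_def b_def c_def by (simp add: power2_eq_square field_simps)
  have "exp (- c) = exp (- (a\<^sup>2 / 2)) * exp (b\<^sup>2 / 2)"
    by (simp add: c exp_add[symmetric])
  then have "exp (- c) * cosh a = cosh a * exp (- (a\<^sup>2 / 2)) * exp (b\<^sup>2 / 2)"
    by simp
  also have "\<dots> \<le> cosh b"
    using cosh_mult_exp_neg_square_antimono[of b a] \<open>b \<le> a\<close>
    by (auto simp: b_def exp_minus field_simps)
  finally have key: "exp (- c) * cosh a \<le> cosh b" .
  have "tilt l u * exp u + tilt l (- u) = 2 * exp (u / 2) * (exp (- c) * cosh a)"
    unfolding tilt_def c_def a_def cosh_def
    by (simp add: abs_if exp_add[symmetric] exp_minus field_simps)
  also have "\<dots> \<le> 2 * exp (u / 2) * cosh b"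
    using key by simp
  also have "\<dots> = 1 + exp u"
    unfolding b_def cosh_def by (simp add: abs_if exp_add[symmetric] exp_minus field_simps)
  finally show ?thesis .
qed

lemma tilt_logistic_le_1:
  assumes "0 \<le> l"
  shows "tilt l u * exp u / (1 + exp u) + tilt l (- u) / (1 + exp u) \<le> 1"
proof -
  have "0 < 1 + exp u"
    by (simp add: add_pos_pos)
  then show ?thesis
    using tilt_balance[OF assms, of u] by (simp add: add_divide_distrib[symmetric])
qed

lemma tilt_exponent_ge:
  fixes S W V t :: real
  assumes V: "0 < V" and t: "0 \<le> t" and W: "W \<le> V" and S: "V / 2 + t < S"
  shows "t\<^sup>2 / (2 * V) \<le> t / V * S - (t / V + (t / V)\<^sup>2) / 2 * W"
proof -
  have "0 \<le> t / V"
    using V t by simp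
  then have "(t / V + (t / V)\<^sup>2) / 2 * W \<le> (t / V + (t / V)\<^sup>2) / 2 * V"
    using W by (intro mult_left_mono) auto
  moreover have "t / V * (V / 2 + t) \<le> t / V * S"
    using \<open>0 \<le> t / V\<close> S by (intro mult_left_mono) auto
  moreover have "t / V * (V / 2 + t) - (t / V + (t / V)\<^sup>2) / 2 * V = t\<^sup>2 / (2 * V)"
    using V by (simp add: field_simps power2_eq_square)
  ultimately show ?thesis
    by linarith
qed

lemma exp_neg_threshold_exponent:
  fixes p n :: nat and \<delta> :: real
  assumes "1 \<le> p" "0 < real n * \<delta>\<^sup>2"
  shows "exp (- ((2 * \<delta> * sqrt (real n * ln (real p)))\<^sup>2 / (2 * (real n * \<delta>\<^sup>2)))) = 1 / (real p)\<^sup>2"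
proof -
  have "(sqrt (real n * ln (real p)))\<^sup>2 = real n * ln (real p)"
    using assms(1) by simp
  then have "(2 * \<delta> * sqrt (real n * ln (real p)))\<^sup>2 = 2 * (real n * \<delta>\<^sup>2) * (2 * ln (real p))"
    by (simp add: power_mult_distrib)
  moreover have "2 * (real n * \<delta>\<^sup>2) \<noteq> 0"
    using assms(2) by linarith
  ultimately have "(2 * \<delta> * sqrt (real n * ln (real p)))\<^sup>2 / (2 * (real n * \<delta>\<^sup>2)) = 2 * ln (real p)"
    by simp
  moreover have "exp (2 * ln (real p)) = (real p)\<^sup>2"
    using assms(1) exp_of_nat_mult[of 2 "ln (real p)"] by simp
  ultimately show ?thesis
    by (simp add: exp_minus inverse_eq_divide)
qed

text \<open>Markov's inequality for \<open>\<Prod>\<^sub>i tilt l (f (\<omega> i))\<close> with \<open>l = t / V\<close>, which exceeds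
  \<open>exp (t\<^sup>2 / (2 V))\<close> on the event.\<close>
lemma measure_PiM_self_normalized_tail:
  fixes M :: "'a measure" and f :: "'a \<Rightarrow> real" and I :: "'i set"
  assumes M: "prob_space M" and I: "finite I" and f [measurable]: "f \<in> borel_measurable M"
    and tilt: "\<And>l. 0 \<le> l \<Longrightarrow> (\<integral>\<^sup>+ z. ennreal (tilt l (f z)) \<partial>M) \<le> 1"
    and V: "0 < V" and t: "0 \<le> t"
  shows "measure (PiM I (\<lambda>_. M)) {\<omega> \<in> space (PiM I (\<lambda>_. M)).
      V / 2 + t < (\<Sum>i\<in>I. f (\<omega> i)) \<and> (\<Sum>i\<in>I. (f (\<omega> i))\<^sup>2) \<le> V} \<le> exp (- (t\<^sup>2 / (2 * V)))"
    (is "measure ?\<Omega> ?S \<le> _")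
proof -
  interpret \<Omega>: prob_space ?\<Omega>
    using M by (intro prob_space_PiM)
  interpret product_sigma_finite "\<lambda>_. M"
    unfolding product_sigma_finite_def using M by (simp add: prob_space_imp_sigma_finite)
  define l where "l = t / V"
  have l: "0 \<le> l"
    using V t by (simp add: l_def)
  have S: "?S \<in> \<Omega>.events"
    by measurable
  have weight: "ennreal (exp (t\<^sup>2 / (2 * V))) * indicator ?S \<omega> \<le> (\<Prod>i\<in>I. ennreal (tilt l (f (\<omega> i))))"
    for \<omega>
  proof (cases "\<omega> \<in> ?S")
    case True
    then have "t\<^sup>2 / (2 * V) \<le> l * (\<Sum>i\<in>I. f (\<omega> i)) - (l + l\<^sup>2) / 2 * (\<Sum>i\<in>I. (f (\<omega> i))\<^sup>2)"
      unfolding l_def using V t by (intro tilt_exponent_ge) auto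
    then have "exp (t\<^sup>2 / (2 * V)) \<le> (\<Prod>i\<in>I. tilt l (f (\<omega> i)))"
      by (simp add: tilt_sum)
    then show ?thesis
      using True by (simp add: prod_ennreal tilt_nonneg ennreal_leI)
  qed simp
  have "ennreal (exp (t\<^sup>2 / (2 * V))) * emeasure ?\<Omega> ?S = (\<integral>\<^sup>+ \<omega>. ennreal (exp (t\<^sup>2 / (2 * V))) * indicator ?S \<omega> \<partial>?\<Omega>)"
    using S by (simp add: nn_integral_cmult_indicator)
  also have "\<dots> \<le> (\<integral>\<^sup>+ \<omega>. (\<Prod>i\<in>I. ennreal (tilt l (f (\<omega> i)))) \<partial>?\<Omega>)"
    by (intro nn_integral_mono weight)
  also have "\<dots> = (\<Prod>i\<in>I. \<integral>\<^sup>+ z. ennreal (tilt l (f z)) \<partial>M)"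
    using I by (intro product_nn_integral_prod) measurable
  also have "\<dots> \<le> 1"
    using tilt[OF l] by (intro prod_le_1) simp
  finally have "exp (t\<^sup>2 / (2 * V)) * measure ?\<Omega> ?S \<le> 1"
    by (simp add: \<Omega>.emeasure_eq_measure ennreal_mult[symmetric] ennreal_le_1)
  then show ?thesis
    by (simp add: exp_minus field_simps)
qed

lemma (in prob_space) prob_Max_le_ge:
  fixes X :: "'j \<Rightarrow> 'a \<Rightarrow> real" and B c :: real
  assumes J: "finite J" "J \<noteq> {}" and X: "\<And>j. j \<in> J \<Longrightarrow> X j \<in> borel_measurable M"
    and E: "E \<in> events"
    and tail: "\<And>j. j \<in> J \<Longrightarrow> prob ({x \<in> space M. B < X j x} \<inter> E) \<le> c"
  shows "1 - card J * c - prob (space M - E) \<le> prob {x \<in> space M. Max ((\<lambda>j. X j x) ` J) \<le> B}"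
proof -
  let ?G = "{x \<in> space M. Max ((\<lambda>j. X j x) ` J) \<le> B}"
  let ?A = "\<lambda>j. {x \<in> space M. B < X j x} \<inter> E"
  have A: "?A j \<in> events" if "j \<in> J" for j
    using X[OF that] E by measurable
  have UA: "(\<Union>j\<in>J. ?A j) \<in> events"
    using J A by (intro sets.finite_UN) auto
  have U: "(space M - E) \<union> (\<Union>j\<in>J. ?A j) \<in> events"
    using E UA by auto
  have "?G \<in> events"
    using J X by measurable
  then have "1 - prob ?G = prob (space M - ?G)"
    by (simp add: prob_compl)
  also have "\<dots> \<le> prob ((space M - E) \<union> (\<Union>j\<in>J. ?A j))"
    using J U by (intro finite_measure_mono) (auto simp: Max_gr_iff not_le)
  also have "\<dots> \<le> prob (space M - E) + prob (\<Union>j\<in>J. ?A j)"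
    using E UA by (intro measure_Un_le) auto
  also have "prob (\<Union>j\<in>J. ?A j) \<le> (\<Sum>j\<in>J. prob (?A j))"
    using J A by (intro finite_measure_subadditive_finite) auto
  also have "\<dots> \<le> card J * c"
    using sum_mono[OF tail] by simp
  finally show ?thesis
    by simp
qed

lemma sets_counting_on [simp]: "sets (counting_on S) = sets borel"
  by (simp add: counting_on_def)

lemma emeasure_counting_on:
  assumes "A \<in> sets borel"
  shows "emeasure (counting_on S) A = emeasure (count_space S) (A \<inter> S)"
proof -
  have "emeasure (counting_on S) A = emeasure (count_space S) ((\<lambda>t. t) -` A \<inter> space (count_space S))"
    unfolding counting_on_def using assms by (intro emeasure_distr) auto
  then show ?thesis
    by (simp add: Int_commute)
qed

lemma sigma_finite_counting_on:
  assumes "countable S"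
  shows "sigma_finite_measure (counting_on S)"
  unfolding sigma_finite_measure_def
proof (intro exI[of _ "insert (- S) ((\<lambda>s. {s}) ` S)"] conjI ballI)
  have S: "S \<in> sets borel"
    by (rule sets.countable[OF _ assms]) simp
  show "countable (insert (- S) ((\<lambda>s. {s}) ` S))"
    using assms by simp
  show "insert (- S) ((\<lambda>s. {s}) ` S) \<subseteq> sets (counting_on S)"
    using S by auto
  show "\<Union> (insert (- S) ((\<lambda>s. {s}) ` S)) = space (counting_on S)"
    by (auto simp: sets_eq_imp_space_eq[OF sets_counting_on])
  fix a
  assume "a \<in> insert (- S) ((\<lambda>s. {s}) ` S)"
  then show "emeasure (counting_on S) a \<noteq> \<infinity>"
    using S by (auto simp: emeasure_counting_on emeasure_count_space_finite)
qed

lemma sets_discrete_or_continuous: "discrete_or_continuous \<nu> \<Longrightarrow> sets \<nu> = sets borel"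
  by (auto simp: discrete_or_continuous_def)

lemma sigma_finite_discrete_or_continuous:
  "discrete_or_continuous \<nu> \<Longrightarrow> sigma_finite_measure \<nu>"
  by (auto simp: discrete_or_continuous_def sigma_finite_counting_on
      lborel.sigma_finite_measure_axioms)

lemma minus_coord_fun_upd [simp]: "minus_coord p j (x(j := t)) = minus_coord p j x"
  by (auto simp: minus_coord_def)

lemma minus_coord_minus_coord [simp]: "minus_coord p j (minus_coord p j x) = minus_coord p j x"
  by (auto simp: minus_coord_def)

lemma measurable_minus_coord [measurable]: "minus_coord p j \<in> measurable (Rp p) (Rpmj p j)"
  unfolding minus_coord_def by (rule measurable_restrict_subset) auto

lemma minus_coord_update: "y \<in> space (Rpmj p j) \<Longrightarrow> minus_coord p j (y(j := t)) = y"
  by (auto simp: minus_coord_def space_PiM PiE_def extensional_def)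

lemma minus_coord_in_space: "x \<in> space (Rp p) \<Longrightarrow> minus_coord p j x \<in> space (Rpmj p j)"
  using measurable_space[OF measurable_minus_coord] .

lemma emeasure_distr_minus_coord:
  assumes M: "sets M = sets (Rp p)" and A: "A \<in> sets (Rpmj p j)"
  shows "emeasure (distr M (Rpmj p j) (minus_coord p j)) A = (\<integral>\<^sup>+ x. indicator A (minus_coord p j x) \<partial>M)"
proof -
  have mc: "minus_coord p j \<in> measurable M (Rpmj p j)"
    using measurable_minus_coord by (simp add: measurable_cong_sets[OF M refl])
  have "emeasure (distr M (Rpmj p j) (minus_coord p j)) A
      = (\<integral>\<^sup>+ y. indicator A y \<partial>distr M (Rpmj p j) (minus_coord p j))"
    using A by simp
  also have "\<dots> = (\<integral>\<^sup>+ x. indicator A (minus_coord p j x) \<partial>M)"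
    using A by (intro nn_integral_distr[OF mc]) simp
  finally show ?thesis .
qed

lemma measurable_cond_density_comp:
  assumes f: "is_cond_density p j \<nu> f"
    and a: "a \<in> measurable N borel" and b: "b \<in> measurable N (Rpmj p j)"
  shows "(\<lambda>z. f (a z) (b z)) \<in> borel_measurable N"
proof -
  have "(\<lambda>(t, y). f t y) \<in> borel_measurable (borel \<Otimes>\<^sub>M Rpmj p j)"
    using f unfolding is_cond_density_def by blast
  from measurable_compose[OF measurable_Pair[OF a b] this] show ?thesis
    by simp
qed

context
  fixes p j :: nat
  assumes j: "j < p"
begin

lemma insert_coord_eq: "insert j ({..<p} - {j}) = {..<p}"
  using j by auto

lemma measurable_coord_update [measurable]:
  "(\<lambda>(y, t). y(j := t)) \<in> measurable (Rpmj p j \<Otimes>\<^sub>M borel) (Rp p)"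
  using measurable_add_dim[of j "{..<p} - {j}" "\<lambda>_. borel"] unfolding insert_coord_eq .

lemma measurable_coord_update_at:
  "y \<in> space (Rpmj p j) \<Longrightarrow> (\<lambda>t. y(j := t)) \<in> measurable borel (Rp p)"
  using measurable_component_update[of y "{..<p} - {j}" "\<lambda>_. borel" j]
  unfolding insert_coord_eq by simp

end

lemma cond_density_nonneg: "is_cond_density p j \<nu> f \<Longrightarrow> 0 \<le> f t y"
  by (simp add: is_cond_density_def)

lemma cond_density_nn_integral: "is_cond_density p j \<nu> f \<Longrightarrow> (\<integral>\<^sup>+ t. ennreal (f t y) \<partial>\<nu>) = 1"
  by (simp add: is_cond_density_def)

definition cond_resample ::
    "nat \<Rightarrow> nat \<Rightarrow> real measure \<Rightarrow> (real \<Rightarrow> (nat \<Rightarrow> real) \<Rightarrow> real) \<Rightarrow> (nat \<Rightarrow> real) \<Rightarrow> (nat \<Rightarrow> real) measure" where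
  "cond_resample p j \<nu> f y = distr (density \<nu> (\<lambda>t. ennreal (f t y))) (Rp p) (\<lambda>t. y(j := t))"

lemma recombine_eq_bind_cond_resample:
  "recombine p j \<nu> f D = bind (distr D (Rpmj p j) (minus_coord p j)) (cond_resample p j \<nu> f)"
  unfolding recombine_def cond_resample_def ..

lemma sets_cond_resample [simp]: "sets (cond_resample p j \<nu> f y) = sets (Rp p)"
  by (simp add: cond_resample_def)

context
  fixes p j :: nat and \<nu> :: "real measure" and f :: "real \<Rightarrow> (nat \<Rightarrow> real) \<Rightarrow> real"
  assumes j: "j < p" and sets_\<nu>: "sets \<nu> = sets borel" and \<nu>: "sigma_finite_measure \<nu>"
    and f: "is_cond_density p j \<nu> f"
begin

lemma measurable_cond_density_swap:
  "(\<lambda>(y, t). f t y) \<in> borel_measurable (Rpmj p j \<Otimes>\<^sub>M \<nu>)"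
proof -
  have "(\<lambda>(t, y). f t y) \<in> borel_measurable (borel \<Otimes>\<^sub>M Rpmj p j)"
    using f unfolding is_cond_density_def by blast
  from measurable_pair_swap[OF this] show ?thesis
    by (simp add: measurable_cong_sets[OF sets_pair_measure_cong[OF refl sets_\<nu>] refl])
qed

lemma measurable_cond_density_at:
  "y \<in> space (Rpmj p j) \<Longrightarrow> (\<lambda>t. ennreal (f t y)) \<in> borel_measurable \<nu>"
  using measurable_compose_Pair1[OF _ measurable_cond_density_swap] by simp

lemma borel_measurable_cond_resample_integral:
  assumes h: "h \<in> borel_measurable (Rp p)"
  shows "(\<lambda>y. \<integral>\<^sup>+ t. ennreal (f t y) * h (y(j := t)) \<partial>\<nu>) \<in> borel_measurable (Rpmj p j)"
proof -
  have "(\<lambda>(y, t). y(j := t)) \<in> measurable (Rpmj p j \<Otimes>\<^sub>M \<nu>) (Rp p)"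
    using measurable_coord_update[OF j]
    by (simp add: measurable_cong_sets[OF sets_pair_measure_cong[OF refl sets_\<nu>] refl])
  with measurable_cond_density_swap h
  have "(\<lambda>(y, t). ennreal (f t y) * h (y(j := t))) \<in> borel_measurable (Rpmj p j \<Otimes>\<^sub>M \<nu>)"
    by (simp add: split_beta')
  then show ?thesis
    using sigma_finite_measure.borel_measurable_nn_integral[OF \<nu>,
        of "\<lambda>y t. ennreal (f t y) * h (y(j := t))"]
    by simp
qed

lemma nn_integral_cond_resample:
  assumes h: "h \<in> borel_measurable (Rp p)" and y: "y \<in> space (Rpmj p j)"
  shows "(\<integral>\<^sup>+ x. h x \<partial>cond_resample p j \<nu> f y) = (\<integral>\<^sup>+ t. ennreal (f t y) * h (y(j := t)) \<partial>\<nu>)"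
proof -
  have upd: "(\<lambda>t. y(j := t)) \<in> measurable \<nu> (Rp p)"
    using measurable_coord_update_at[OF j y] by (simp add: measurable_cong_sets[OF sets_\<nu> refl])
  show ?thesis
    unfolding cond_resample_def
    using upd h measurable_cond_density_at[OF y]
    by (simp add: nn_integral_distr nn_integral_density)
qed

lemma prob_space_cond_resample:
  assumes "y \<in> space (Rpmj p j)"
  shows "prob_space (cond_resample p j \<nu> f y)"
proof (rule prob_spaceI)
  have "emeasure (cond_resample p j \<nu> f y) (space (cond_resample p j \<nu> f y))
      = (\<integral>\<^sup>+ x. 1 \<partial>cond_resample p j \<nu> f y)"
    by simp
  also have "\<dots> = (\<integral>\<^sup>+ t. ennreal (f t y) * 1 \<partial>\<nu>)"
    using assms by (intro nn_integral_cond_resample) auto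
  also have "\<dots> = 1"
    using cond_density_nn_integral[OF f] by simp
  finally show "emeasure (cond_resample p j \<nu> f y) (space (cond_resample p j \<nu> f y)) = 1" .
qed

lemma measurable_cond_resample:
  "cond_resample p j \<nu> f \<in> measurable (Rpmj p j) (subprob_algebra (Rp p))"
proof (rule measurable_subprob_algebra)
  fix A
  assume A: "A \<in> sets (Rp p)"
  have "(\<lambda>y. \<integral>\<^sup>+ t. ennreal (f t y) * indicator A (y(j := t)) \<partial>\<nu>) \<in> borel_measurable (Rpmj p j)"
    using A by (intro borel_measurable_cond_resample_integral) simp
  then show "(\<lambda>y. emeasure (cond_resample p j \<nu> f y) A) \<in> borel_measurable (Rpmj p j)"
    by (rule measurable_cong[THEN iffD1, rotated])
      (use A in \<open>simp add: nn_integral_cond_resample flip: nn_integral_indicator\<close>)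
qed (auto intro: prob_space_imp_subprob_space prob_space_cond_resample)

lemma nn_integral_recombine:
  assumes D: "sets D = sets (Rp p)" and h: "h \<in> borel_measurable (Rp p)"
  shows "(\<integral>\<^sup>+ x. h x \<partial>recombine p j \<nu> f D)
       = (\<integral>\<^sup>+ x. \<integral>\<^sup>+ t. ennreal (f t (minus_coord p j x)) * h ((minus_coord p j x)(j := t)) \<partial>\<nu> \<partial>D)"
proof -
  have mc: "minus_coord p j \<in> measurable D (Rpmj p j)"
    using measurable_minus_coord by (simp add: measurable_cong_sets[OF D refl])
  have "cond_resample p j \<nu> f \<in> measurable (distr D (Rpmj p j) (minus_coord p j)) (subprob_algebra (Rp p))"
    using measurable_cond_resample by (simp add: measurable_cong_sets[OF sets_distr refl])
  then have "(\<integral>\<^sup>+ x. h x \<partial>recombine p j \<nu> f D)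
      = (\<integral>\<^sup>+ y. \<integral>\<^sup>+ x. h x \<partial>cond_resample p j \<nu> f y \<partial>distr D (Rpmj p j) (minus_coord p j))"
    unfolding recombine_eq_bind_cond_resample by (rule nn_integral_bind[OF h])
  also have "\<dots> = (\<integral>\<^sup>+ y. \<integral>\<^sup>+ t. ennreal (f t y) * h (y(j := t)) \<partial>\<nu> \<partial>distr D (Rpmj p j) (minus_coord p j))"
    by (intro nn_integral_cong nn_integral_cond_resample h) simp
  also have "\<dots> = (\<integral>\<^sup>+ x. \<integral>\<^sup>+ t. ennreal (f t (minus_coord p j x)) * h ((minus_coord p j x)(j := t)) \<partial>\<nu> \<partial>D)"
    using borel_measurable_cond_resample_integral[OF h] by (intro nn_integral_distr[OF mc]) simp
  finally show ?thesis .
qed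

end

lemma measurable_swap_coord [measurable]:
  assumes "j < p"
  shows "swap_coord j \<in> measurable (Rp p \<Otimes>\<^sub>M Rp p) (Rp p \<Otimes>\<^sub>M Rp p)"
proof -
  have I: "{..<p} = {..<p} \<union> {j}"
    using assms by auto
  show ?thesis
    unfolding swap_coord_def using assms
    by (intro measurable_Pair measurable_fun_upd[OF I]) auto
qed

context
  fixes p :: nat and K :: "(nat \<Rightarrow> real) \<Rightarrow> (nat \<Rightarrow> real) measure"
  assumes K: "K \<in> measurable (Rp p) (prob_algebra (Rp p))"
begin

lemma measurable_prob_kernel:
  assumes "sets M = sets (Rp p)"
  shows "K \<in> measurable M (subprob_algebra (Rp p))"
  using measurable_prob_algebraD[OF K] by (simp add: measurable_cong_sets[OF assms refl])

lemma sets_prob_kernel: "x \<in> space (Rp p) \<Longrightarrow> sets (K x) = sets (Rp p)"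
  using measurable_space[OF K] by (auto simp: space_prob_algebra)

lemma prob_space_prob_kernel: "x \<in> space (Rp p) \<Longrightarrow> prob_space (K x)"
  using measurable_space[OF K] by (auto simp: space_prob_algebra)

lemma measurable_Pair_prob_kernel:
  assumes "x \<in> space (Rp p)"
  shows "(\<lambda>xt. (x, xt)) \<in> measurable (K x) (Rp p \<Otimes>\<^sub>M Rp p)"
  using assms by (simp add: measurable_cong_sets[OF sets_prob_kernel[OF assms] refl])

lemma measurable_joint_law_kernel:
  assumes M: "sets M = sets (Rp p)"
  shows "(\<lambda>x. distr (K x) (Rp p \<Otimes>\<^sub>M Rp p) (\<lambda>xt. (x, xt))) \<in> measurable M (subprob_algebra (Rp p \<Otimes>\<^sub>M Rp p))"
proof (rule measurable_distr2[OF _ measurable_prob_kernel[OF M]])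
  show "(\<lambda>(x, xt). (x, xt)) \<in> measurable (M \<Otimes>\<^sub>M Rp p) (Rp p \<Otimes>\<^sub>M Rp p)"
    by (simp add: measurable_cong_sets[OF sets_pair_measure_cong[OF M refl] refl])
qed

lemma borel_measurable_nn_integral_prob_kernel:
  assumes G: "G \<in> borel_measurable (Rp p \<Otimes>\<^sub>M Rp p)"
  shows "(\<lambda>x. \<integral>\<^sup>+ xt. G (x, xt) \<partial>K x) \<in> borel_measurable (Rp p)"
proof -
  have "(\<lambda>(x, xt). G (x, xt)) \<in> borel_measurable (Rp p \<Otimes>\<^sub>M Rp p)"
    using G by simp
  from nn_integral_measurable_subprob_algebra2[OF this measurable_prob_kernel] show ?thesis
    by simp
qed

context
  fixes M :: "(nat \<Rightarrow> real) measure"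
  assumes M: "prob_space M" "sets M = sets (Rp p)"
begin

lemma prob_space_joint_law: "prob_space (joint_law p M K)"
  unfolding joint_law_def
proof (rule prob_space.prob_space_bind[OF M(1) _ measurable_joint_law_kernel[OF M(2)]])
  show "AE x in M. prob_space (distr (K x) (Rp p \<Otimes>\<^sub>M Rp p) (\<lambda>xt. (x, xt)))"
  proof (rule AE_I2)
    fix x
    assume "x \<in> space M"
    then have x: "x \<in> space (Rp p)"
      using sets_eq_imp_space_eq[OF M(2)] by simp
    show "prob_space (distr (K x) (Rp p \<Otimes>\<^sub>M Rp p) (\<lambda>xt. (x, xt)))"
      by (rule prob_space.prob_space_distr[OF prob_space_prob_kernel[OF x] measurable_Pair_prob_kernel[OF x]])
  qed
qed

lemma sets_joint_law: "sets (joint_law p M K) = sets (Rp p \<Otimes>\<^sub>M Rp p)"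
  unfolding joint_law_def by (rule sets_bind) (simp_all add: prob_space.not_empty[OF M(1)])

lemma nn_integral_joint_law:
  assumes G: "G \<in> borel_measurable (Rp p \<Otimes>\<^sub>M Rp p)"
  shows "(\<integral>\<^sup>+ z. G z \<partial>joint_law p M K) = (\<integral>\<^sup>+ x. \<integral>\<^sup>+ xt. G (x, xt) \<partial>K x \<partial>M)"
proof -
  have "(\<integral>\<^sup>+ z. G z \<partial>joint_law p M K)
      = (\<integral>\<^sup>+ x. \<integral>\<^sup>+ z. G z \<partial>distr (K x) (Rp p \<Otimes>\<^sub>M Rp p) (\<lambda>xt. (x, xt)) \<partial>M)"
    unfolding joint_law_def by (rule nn_integral_bind[OF G measurable_joint_law_kernel[OF M(2)]])
  also have "\<dots> = (\<integral>\<^sup>+ x. \<integral>\<^sup>+ xt. G (x, xt) \<partial>K x \<partial>M)"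
  proof (intro nn_integral_cong)
    fix x
    assume "x \<in> space M"
    then have "x \<in> space (Rp p)"
      using sets_eq_imp_space_eq[OF M(2)] by simp
    then show "(\<integral>\<^sup>+ z. G z \<partial>distr (K x) (Rp p \<Otimes>\<^sub>M Rp p) (\<lambda>xt. (x, xt))) = (\<integral>\<^sup>+ xt. G (x, xt) \<partial>K x)"
      using G measurable_Pair_prob_kernel by (simp add: nn_integral_distr)
  qed
  finally show ?thesis .
qed

lemma AE_joint_law_fst:
  assumes P: "Measurable.pred (Rp p) P" and AE: "AE x in M. P x"
  shows "AE z in joint_law p M K. P (fst z)"
  unfolding joint_law_def
proof (subst AE_bind[OF measurable_joint_law_kernel[OF M(2)]])
  show "AE x in M. AE z in distr (K x) (Rp p \<Otimes>\<^sub>M Rp p) (\<lambda>xt. (x, xt)). P (fst z)"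
    using AE AE_space
  proof eventually_elim
    case (elim x)
    then have "x \<in> space (Rp p)"
      using sets_eq_imp_space_eq[OF M(2)] by simp
    then have "(\<lambda>xt. (x, xt)) \<in> measurable (K x) (Rp p \<Otimes>\<^sub>M Rp p)"
      by (rule measurable_Pair_prob_kernel)
    moreover have "{z \<in> space (Rp p \<Otimes>\<^sub>M Rp p). P (fst z)} \<in> sets (Rp p \<Otimes>\<^sub>M Rp p)"
      using P by measurable
    ultimately show ?case
      using elim by (simp add: AE_distr_iff)
  qed
qed (rule measurable_compose[OF measurable_fst P])

end

end

lemma ennreal_mult_ratio:
  fixes q r :: real
  assumes "0 \<le> q" "0 \<le> r" "0 < r \<longleftrightarrow> 0 < q"
  shows "ennreal q * (a * ennreal (r / q)) = ennreal r * a"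
proof (cases "q = 0")
  case False
  then have "ennreal q * ennreal (r / q) = ennreal r"
    using assms by (simp flip: ennreal_mult)
  then show ?thesis
    by (metis mult.assoc mult.commute)
qed (use assms in simp)

locale knockoff_coordinate =
  fixes p j :: nat and \<nu> :: "real measure" and P Q :: "nat \<Rightarrow> real \<Rightarrow> (nat \<Rightarrow> real) \<Rightarrow> real"
    and PX :: "(nat \<Rightarrow> real) measure" and K :: "(nat \<Rightarrow> real) \<Rightarrow> (nat \<Rightarrow> real) measure"
  assumes j: "j < p"
    and base: "discrete_or_continuous \<nu>"
    and P_dens: "is_cond_density p j \<nu> (P j)"
    and Q_dens: "is_cond_density p j \<nu> (Q j)"
    and PX: "prob_space PX" and sets_PX: "sets PX = sets (Rp p)"
    and P_true: "has_conditional p j \<nu> (P j) PX"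
    and same_support: "\<And>t y. 0 < P j t y \<longleftrightarrow> 0 < Q j t y"
    and K: "K \<in> measurable (Rp p) (prob_algebra (Rp p))"
    and exch: "pairwise_exchangeable p j \<nu> (Q j) K"
begin

lemma sets_\<nu>: "sets \<nu> = sets borel"
  using base by (rule sets_discrete_or_continuous)

lemma sigma_finite_\<nu>: "sigma_finite_measure \<nu>"
  using base by (rule sigma_finite_discrete_or_continuous)

text \<open>The law \<open>D\<^sup>(\<^sup>j\<^sup>)\<close> to which exchangeability is applied; \<open>P\<^sub>X\<close> has density
  \<open>density_ratio\<close> with respect to it.\<close>
abbreviation PXQ :: "(nat \<Rightarrow> real) measure" where
  "PXQ \<equiv> recombine p j \<nu> (Q j) PX"

abbreviation JP :: "((nat \<Rightarrow> real) \<times> (nat \<Rightarrow> real)) measure" where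
  "JP \<equiv> joint_law p PX K"

abbreviation JQ :: "((nat \<Rightarrow> real) \<times> (nat \<Rightarrow> real)) measure" where
  "JQ \<equiv> joint_law p PXQ K"

abbreviation L :: "(nat \<Rightarrow> real) \<times> (nat \<Rightarrow> real) \<Rightarrow> real" where
  "L z \<equiv> llr p P Q j (fst z) (snd z)"

definition density_ratio :: "(nat \<Rightarrow> real) \<Rightarrow> real" where
  "density_ratio x = P j (x j) (minus_coord p j x) / Q j (x j) (minus_coord p j x)"

lemma measurable_P_at:
  "(\<lambda>x. P j (a x) (minus_coord p j (b x))) \<in> borel_measurable N"
  if "a \<in> borel_measurable N" "b \<in> measurable N (Rp p)"
  using that by (intro measurable_cond_density_comp[OF P_dens] measurable_compose[OF _ measurable_minus_coord])

lemma measurable_Q_at: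
  "(\<lambda>x. Q j (a x) (minus_coord p j (b x))) \<in> borel_measurable N"
  if "a \<in> borel_measurable N" "b \<in> measurable N (Rp p)"
  using that by (intro measurable_cond_density_comp[OF Q_dens] measurable_compose[OF _ measurable_minus_coord])

lemma measurable_P_coord [measurable]: "(\<lambda>x. P j (x j) (minus_coord p j x)) \<in> borel_measurable (Rp p)"
  using j by (auto intro!: measurable_P_at)

lemma measurable_Q_coord [measurable]: "(\<lambda>x. Q j (x j) (minus_coord p j x)) \<in> borel_measurable (Rp p)"
  using j by (auto intro!: measurable_Q_at)

lemma measurable_density_ratio [measurable]: "density_ratio \<in> borel_measurable (Rp p)"
  unfolding density_ratio_def by measurable

lemma measurable_ennreal_density_ratio [measurable]:
  "(\<lambda>x. ennreal (density_ratio x)) \<in> borel_measurable (Rp p)"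
  by (rule measurable_compose[OF measurable_density_ratio measurable_ennreal])

lemma measurable_L [measurable]: "L \<in> borel_measurable (Rp p \<Otimes>\<^sub>M Rp p)"
proof -
  have [measurable]: "(\<lambda>z. P j (fst z j) (minus_coord p j (fst z))) \<in> borel_measurable (Rp p \<Otimes>\<^sub>M Rp p)"
    "(\<lambda>z. Q j (fst z j) (minus_coord p j (fst z))) \<in> borel_measurable (Rp p \<Otimes>\<^sub>M Rp p)"
    "(\<lambda>z. P j (snd z j) (minus_coord p j (fst z))) \<in> borel_measurable (Rp p \<Otimes>\<^sub>M Rp p)"
    "(\<lambda>z. Q j (snd z j) (minus_coord p j (fst z))) \<in> borel_measurable (Rp p \<Otimes>\<^sub>M Rp p)"
    using j by (auto intro!: measurable_P_at measurable_Q_at)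
  show ?thesis
    unfolding llr_def by measurable
qed

lemma nn_integral_PX:
  assumes "h \<in> borel_measurable (Rp p)"
  shows "(\<integral>\<^sup>+ x. h x \<partial>PX)
       = (\<integral>\<^sup>+ x. \<integral>\<^sup>+ t. ennreal (P j t (minus_coord p j x)) * h ((minus_coord p j x)(j := t)) \<partial>\<nu> \<partial>PX)"
proof -
  have "PX = recombine p j \<nu> (P j) PX"
    using P_true unfolding has_conditional_def .
  then have "(\<integral>\<^sup>+ x. h x \<partial>PX) = (\<integral>\<^sup>+ x. h x \<partial>recombine p j \<nu> (P j) PX)"
    by simp
  also have "\<dots> = (\<integral>\<^sup>+ x. \<integral>\<^sup>+ t. ennreal (P j t (minus_coord p j x)) * h ((minus_coord p j x)(j := t)) \<partial>\<nu> \<partial>PX)"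
    by (rule nn_integral_recombine[OF j sets_\<nu> sigma_finite_\<nu> P_dens sets_PX assms])
  finally show ?thesis .
qed

lemma nn_integral_PXQ:
  "h \<in> borel_measurable (Rp p) \<Longrightarrow> (\<integral>\<^sup>+ x. h x \<partial>PXQ)
       = (\<integral>\<^sup>+ x. \<integral>\<^sup>+ t. ennreal (Q j t (minus_coord p j x)) * h ((minus_coord p j x)(j := t)) \<partial>\<nu> \<partial>PX)"
  by (rule nn_integral_recombine[OF j sets_\<nu> sigma_finite_\<nu> Q_dens sets_PX])

lemma prob_space_PXQ: "prob_space PXQ"
  and sets_PXQ: "sets PXQ = sets (Rp p)"
proof -
  have mc: "minus_coord p j \<in> measurable PX (Rpmj p j)"
    using measurable_minus_coord by (simp add: measurable_cong_sets[OF sets_PX refl])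
  interpret X: prob_space "distr PX (Rpmj p j) (minus_coord p j)"
    using prob_space.prob_space_distr[OF PX mc] .
  have resample: "cond_resample p j \<nu> (Q j) \<in> measurable (distr PX (Rpmj p j) (minus_coord p j)) (subprob_algebra (Rp p))"
    using measurable_cond_resample[OF j sets_\<nu> sigma_finite_\<nu> Q_dens] by simp
  show "prob_space PXQ"
    unfolding recombine_eq_bind_cond_resample
    by (rule X.prob_space_bind[OF _ resample])
      (intro AE_I2, simp add: prob_space_cond_resample[OF j sets_\<nu> sigma_finite_\<nu> Q_dens])
  show "sets PXQ = sets (Rp p)"
    unfolding recombine_eq_bind_cond_resample by (rule sets_bind[OF _ X.not_empty]) simp
qed

lemma nn_integral_PXQ_density_ratio:
  assumes h: "h \<in> borel_measurable (Rp p)"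
  shows "(\<integral>\<^sup>+ x. h x * ennreal (density_ratio x) \<partial>PXQ) = (\<integral>\<^sup>+ x. h x \<partial>PX)"
proof -
  have "(\<integral>\<^sup>+ x. h x * ennreal (density_ratio x) \<partial>PXQ)
     = (\<integral>\<^sup>+ x. \<integral>\<^sup>+ t. ennreal (Q j t (minus_coord p j x))
          * (h ((minus_coord p j x)(j := t)) * ennreal (density_ratio ((minus_coord p j x)(j := t)))) \<partial>\<nu> \<partial>PX)"
    using h measurable_ennreal_density_ratio by (intro nn_integral_PXQ borel_measurable_times_ennreal)
  also have "\<dots> = (\<integral>\<^sup>+ x. \<integral>\<^sup>+ t. ennreal (P j t (minus_coord p j x)) * h ((minus_coord p j x)(j := t)) \<partial>\<nu> \<partial>PX)"
  proof (intro nn_integral_cong)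
    fix x t
    assume "x \<in> space PX"
    then have "minus_coord p j x \<in> space (Rpmj p j)"
      using minus_coord_in_space sets_eq_imp_space_eq[OF sets_PX] by simp
    then have "density_ratio ((minus_coord p j x)(j := t))
        = P j t (minus_coord p j x) / Q j t (minus_coord p j x)"
      by (simp add: density_ratio_def minus_coord_update)
    then show "ennreal (Q j t (minus_coord p j x))
          * (h ((minus_coord p j x)(j := t)) * ennreal (density_ratio ((minus_coord p j x)(j := t))))
        = ennreal (P j t (minus_coord p j x)) * h ((minus_coord p j x)(j := t))"
      using cond_density_nonneg[OF P_dens] cond_density_nonneg[OF Q_dens] same_support
      by (simp add: ennreal_mult_ratio)
  qed
  also have "\<dots> = (\<integral>\<^sup>+ x. h x \<partial>PX)"
    by (rule nn_integral_PX[OF h, symmetric])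
  finally show ?thesis .
qed

lemma distr_minus_coord_PXQ:
  "distr PXQ (Rpmj p j) (minus_coord p j) = distr PX (Rpmj p j) (minus_coord p j)"
proof (rule measure_eqI)
  fix A
  assume "A \<in> sets (distr PXQ (Rpmj p j) (minus_coord p j))"
  then have A: "A \<in> sets (Rpmj p j)"
    by simp
  have "emeasure (distr PXQ (Rpmj p j) (minus_coord p j)) A = (\<integral>\<^sup>+ x. indicator A (minus_coord p j x) \<partial>PXQ)"
    by (rule emeasure_distr_minus_coord[OF sets_PXQ A])
  also have "\<dots> = (\<integral>\<^sup>+ x. \<integral>\<^sup>+ t. ennreal (Q j t (minus_coord p j x)) * indicator A (minus_coord p j x) \<partial>\<nu> \<partial>PX)"
    using A measurable_minus_coord by (subst nn_integral_PXQ) simp_all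
  also have "\<dots> = (\<integral>\<^sup>+ x. indicator A (minus_coord p j x) \<partial>PX)"
  proof (intro nn_integral_cong)
    fix x
    assume "x \<in> space PX"
    then have "minus_coord p j x \<in> space (Rpmj p j)"
      using minus_coord_in_space sets_eq_imp_space_eq[OF sets_PX] by simp
    then show "(\<integral>\<^sup>+ t. ennreal (Q j t (minus_coord p j x)) * indicator A (minus_coord p j x) \<partial>\<nu>)
        = indicator A (minus_coord p j x)"
      using measurable_cond_density_at[OF j sets_\<nu> sigma_finite_\<nu> Q_dens]
      by (simp add: nn_integral_multc cond_density_nn_integral[OF Q_dens])
  qed
  also have "\<dots> = emeasure (distr PX (Rpmj p j) (minus_coord p j)) A"
    by (rule emeasure_distr_minus_coord[OF sets_PX A, symmetric])
  finally show "emeasure (distr PXQ (Rpmj p j) (minus_coord p j)) A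
      = emeasure (distr PX (Rpmj p j) (minus_coord p j)) A" .
qed simp

lemma has_conditional_PXQ: "has_conditional p j \<nu> (Q j) PXQ"
proof -
  have "recombine p j \<nu> (Q j) PXQ = distr PXQ (Rpmj p j) (minus_coord p j) \<bind> cond_resample p j \<nu> (Q j)"
    by (rule recombine_eq_bind_cond_resample)
  also have "\<dots> = distr PX (Rpmj p j) (minus_coord p j) \<bind> cond_resample p j \<nu> (Q j)"
    by (simp only: distr_minus_coord_PXQ)
  also have "\<dots> = PXQ"
    by (rule recombine_eq_bind_cond_resample[symmetric])
  finally show ?thesis
    unfolding has_conditional_def by simp
qed

lemma distr_JQ_swap_coord: "distr JQ (Rp p \<Otimes>\<^sub>M Rp p) (swap_coord j) = JQ"
  using exch prob_space_PXQ sets_PXQ has_conditional_PXQ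
  unfolding pairwise_exchangeable_def by blast

lemma sets_JQ: "sets JQ = sets (Rp p \<Otimes>\<^sub>M Rp p)"
  by (rule sets_joint_law[OF K prob_space_PXQ sets_PXQ])

lemma nn_integral_JQ_swap_coord:
  assumes H: "H \<in> borel_measurable (Rp p \<Otimes>\<^sub>M Rp p)"
  shows "(\<integral>\<^sup>+ z. H z \<partial>JQ) = (\<integral>\<^sup>+ z. H (swap_coord j z) \<partial>JQ)"
proof -
  have "(\<integral>\<^sup>+ z. H z \<partial>JQ) = (\<integral>\<^sup>+ z. H z \<partial>distr JQ (Rp p \<Otimes>\<^sub>M Rp p) (swap_coord j))"
    by (simp only: distr_JQ_swap_coord)
  also have "\<dots> = (\<integral>\<^sup>+ z. H (swap_coord j z) \<partial>JQ)"
    using H measurable_swap_coord[OF j] by (simp add: nn_integral_distr measurable_cong_sets[OF sets_JQ refl])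
  finally show ?thesis .
qed

lemma nn_integral_JP_eq_JQ_density_ratio:
  assumes G: "G \<in> borel_measurable (Rp p \<Otimes>\<^sub>M Rp p)"
  shows "(\<integral>\<^sup>+ z. G z \<partial>JP) = (\<integral>\<^sup>+ z. G z * ennreal (density_ratio (fst z)) \<partial>JQ)"
proof -
  have "(\<integral>\<^sup>+ z. G z \<partial>JP) = (\<integral>\<^sup>+ x. \<integral>\<^sup>+ xt. G (x, xt) \<partial>K x \<partial>PX)"
    by (rule nn_integral_joint_law[OF K PX sets_PX G])
  also have "\<dots> = (\<integral>\<^sup>+ x. (\<integral>\<^sup>+ xt. G (x, xt) \<partial>K x) * ennreal (density_ratio x) \<partial>PXQ)"
    using G by (intro nn_integral_PXQ_density_ratio[symmetric] borel_measurable_nn_integral_prob_kernel[OF K])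
  also have "\<dots> = (\<integral>\<^sup>+ x. \<integral>\<^sup>+ xt. G (x, xt) * ennreal (density_ratio x) \<partial>K x \<partial>PXQ)"
  proof (intro nn_integral_cong)
    fix x
    assume "x \<in> space PXQ"
    then have x: "x \<in> space (Rp p)"
      using sets_eq_imp_space_eq[OF sets_PXQ] by simp
    have "(\<lambda>xt. G (x, xt)) \<in> borel_measurable (K x)"
      using measurable_compose[OF measurable_Pair_prob_kernel[OF K x] G] .
    then show "(\<integral>\<^sup>+ xt. G (x, xt) \<partial>K x) * ennreal (density_ratio x)
        = (\<integral>\<^sup>+ xt. G (x, xt) * ennreal (density_ratio x) \<partial>K x)"
      by (rule nn_integral_multc[symmetric])
  qed
  also have "\<dots> = (\<integral>\<^sup>+ z. G z * ennreal (density_ratio (fst z)) \<partial>JQ)"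
    using G measurable_compose[OF measurable_fst measurable_ennreal_density_ratio]
      nn_integral_joint_law[OF K prob_space_PXQ sets_PXQ, of "\<lambda>z. G z * ennreal (density_ratio (fst z))"]
    by simp
  finally show ?thesis .
qed

lemma AE_PXQ_Q_pos: "AE x in PXQ. 0 < Q j (x j) (minus_coord p j x)"
proof -
  let ?N = "{x. \<not> 0 < Q j (x j) (minus_coord p j x)}"
  have "(\<integral>\<^sup>+ x. indicator ?N x \<partial>PXQ)
      = (\<integral>\<^sup>+ x. \<integral>\<^sup>+ t. ennreal (Q j t (minus_coord p j x)) * indicator ?N ((minus_coord p j x)(j := t)) \<partial>\<nu> \<partial>PX)"
    by (rule nn_integral_PXQ) measurable
  also have "\<dots> = (\<integral>\<^sup>+ x. \<integral>\<^sup>+ t. 0 \<partial>\<nu> \<partial>PX)"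
    using cond_density_nonneg[OF Q_dens] by (intro nn_integral_cong) (auto simp: indicator_def not_less intro: order_antisym)
  also have "\<dots> = 0"
    by simp
  finally have "(\<integral>\<^sup>+ x. indicator ?N x \<partial>PXQ) = 0" .
  moreover have "{x \<in> space PXQ. 0 < Q j (x j) (minus_coord p j x)} \<in> sets PXQ"
    unfolding sets_eq_imp_space_eq[OF sets_PXQ] sets_PXQ by measurable
  ultimately show ?thesis
    by (simp add: AE_iff_nn_integral)
qed

lemma AE_JQ_Q_pos:
  "AE z in JQ. 0 < Q j (fst z j) (minus_coord p j (fst z)) \<and> 0 < Q j (snd z j) (minus_coord p j (fst z))"
proof -
  have fst: "AE z in JQ. 0 < Q j (fst z j) (minus_coord p j (fst z))"
    by (rule AE_joint_law_fst[OF K prob_space_PXQ sets_PXQ _ AE_PXQ_Q_pos]) measurable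
  then have "AE z in distr JQ (Rp p \<Otimes>\<^sub>M Rp p) (swap_coord j). 0 < Q j (fst z j) (minus_coord p j (fst z))"
    by (simp only: distr_JQ_swap_coord)
  then have "AE z in JQ. 0 < Q j (fst (swap_coord j z) j) (minus_coord p j (fst (swap_coord j z)))"
    using measurable_swap_coord[OF j] by (subst (asm) AE_distr_iff) (simp_all add: measurable_cong_sets[OF sets_JQ refl])
  then have "AE z in JQ. 0 < Q j (snd z j) (minus_coord p j (fst z))"
    by (simp add: swap_coord_def)
  with fst show ?thesis
    by eventually_elim simp
qed

lemma L_swap_coord: "L (swap_coord j z) = - L z"
proof -
  define y where "y = minus_coord p j (fst z)"
  have "L (swap_coord j z)
      = ln (inverse ((P j (fst z j) y * Q j (snd z j) y) / (Q j (fst z j) y * P j (snd z j) y)))"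
    by (simp add: llr_def swap_coord_def y_def ac_simps)
  also have "\<dots> = - L z"
    by (simp only: ln_inverse) (simp add: llr_def y_def)
  finally show ?thesis .
qed

lemma density_ratio_swap_coord:
  assumes "0 < Q j (fst z j) (minus_coord p j (fst z))" "0 < Q j (snd z j) (minus_coord p j (fst z))"
  shows "density_ratio (fst (swap_coord j z)) = exp (- L z) * density_ratio (fst z)"
proof -
  define y where "y = minus_coord p j (fst z)"
  have "0 < P j (fst z j) y" "0 < P j (snd z j) y"
    using assms same_support by (simp_all add: y_def)
  then show ?thesis
    using assms
    by (simp add: density_ratio_def swap_coord_def llr_def exp_minus y_def[symmetric] field_simps)
qed

text \<open>Change of measure to \<open>JQ\<close>, where swapping coordinate \<open>j\<close> negates \<open>L\<close> and multiplies
  the density ratio by \<open>exp (- L)\<close>.\<close>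
lemma nn_integral_L_reflection:
  assumes g [measurable]: "g \<in> borel_measurable borel" and g_nonneg: "\<And>u. 0 \<le> g u"
  shows "(\<integral>\<^sup>+ z. ennreal (g (L z)) \<partial>JP) = (\<integral>\<^sup>+ z. ennreal (g (- L z) * exp (- L z)) \<partial>JP)"
proof -
  have "(\<integral>\<^sup>+ z. ennreal (g (L z)) \<partial>JP) = (\<integral>\<^sup>+ z. ennreal (g (L z)) * ennreal (density_ratio (fst z)) \<partial>JQ)"
    by (rule nn_integral_JP_eq_JQ_density_ratio) measurable
  also have "\<dots> = (\<integral>\<^sup>+ z. ennreal (g (L (swap_coord j z))) * ennreal (density_ratio (fst (swap_coord j z))) \<partial>JQ)"
    using measurable_swap_coord[OF j] by (intro nn_integral_JQ_swap_coord) measurable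
  also have "\<dots> = (\<integral>\<^sup>+ z. ennreal (g (- L z) * exp (- L z)) * ennreal (density_ratio (fst z)) \<partial>JQ)"
    using AE_JQ_Q_pos
  proof (rule nn_integral_cong_AE[OF AE_mp, OF _ AE_I2], safe)
    fix z
    assume "0 < Q j (fst z j) (minus_coord p j (fst z))" "0 < Q j (snd z j) (minus_coord p j (fst z))"
    then have "density_ratio (fst (swap_coord j z)) = exp (- L z) * density_ratio (fst z)"
      "0 \<le> density_ratio (fst z)"
      using density_ratio_swap_coord same_support cond_density_nonneg[OF P_dens]
      by (auto simp: density_ratio_def less_le_not_le)
    then show "ennreal (g (L (swap_coord j z))) * ennreal (density_ratio (fst (swap_coord j z)))
        = ennreal (g (- L z) * exp (- L z)) * ennreal (density_ratio (fst z))"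
      using g_nonneg by (simp add: L_swap_coord ennreal_mult' mult.assoc)
  qed
  also have "\<dots> = (\<integral>\<^sup>+ z. ennreal (g (- L z) * exp (- L z)) \<partial>JP)"
    by (rule nn_integral_JP_eq_JQ_density_ratio[symmetric]) measurable
  finally show ?thesis .
qed

lemma prob_space_JP: "prob_space JP"
  by (rule prob_space_joint_law[OF K PX sets_PX])

lemma sets_JP: "sets JP = sets (Rp p \<Otimes>\<^sub>M Rp p)"
  by (rule sets_joint_law[OF K PX sets_PX])

lemma measurable_L_JP [measurable]: "L \<in> borel_measurable JP"
  using measurable_L by (simp add: measurable_cong_sets[OF sets_JP refl])

text \<open>Split \<open>tilt l L\<close> with the logistic weights \<open>e\<^sup>L / (1 + e\<^sup>L)\<close> and \<open>1 / (1 + e\<^sup>L)\<close>: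
  reflection turns the second part into \<open>tilt l (- L) / (1 + e\<^sup>L)\<close>, and the sum is at most 1
  pointwise by \<open>tilt_logistic_le_1\<close>.\<close>
lemma nn_integral_tilt_L_le_1:
  assumes l: "0 \<le> l"
  shows "(\<integral>\<^sup>+ z. ennreal (tilt l (L z)) \<partial>JP) \<le> 1"
proof -
  define A where "A u = tilt l u * exp u / (1 + exp u)" for u
  define B where "B u = tilt l u / (1 + exp u)" for u
  have pos: "0 < 1 + exp u" for u :: real
    by (simp add: add_pos_pos)
  have nonneg: "0 \<le> A u" "0 \<le> B u" for u
    using pos by (simp_all add: A_def B_def tilt_nonneg)
  have [measurable]: "A \<in> borel_measurable borel" "B \<in> borel_measurable borel"
    unfolding A_def B_def by measurable
  have "tilt l u = A u + B u" for u
  proof -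
    have "A u + B u = tilt l u * (1 + exp u) / (1 + exp u)"
      unfolding A_def B_def by (simp add: add_divide_distrib[symmetric] algebra_simps)
    then show ?thesis
      using pos[of u] by simp
  qed
  then have "(\<integral>\<^sup>+ z. ennreal (tilt l (L z)) \<partial>JP) = (\<integral>\<^sup>+ z. ennreal (A (L z)) + ennreal (B (L z)) \<partial>JP)"
    using nonneg by (simp add: ennreal_plus)
  also have "\<dots> = (\<integral>\<^sup>+ z. ennreal (A (L z)) \<partial>JP) + (\<integral>\<^sup>+ z. ennreal (B (L z)) \<partial>JP)"
    by (rule nn_integral_add) measurable
  also have "(\<integral>\<^sup>+ z. ennreal (B (L z)) \<partial>JP) = (\<integral>\<^sup>+ z. ennreal (tilt l (- L z) / (1 + exp (L z))) \<partial>JP)"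
  proof -
    have "B (- u) * exp (- u) = tilt l (- u) / (1 + exp u)" for u
      unfolding B_def using pos[of u] by (simp add: exp_minus field_simps)
    then show ?thesis
      using nn_integral_L_reflection[of B] nonneg by simp
  qed
  also have "(\<integral>\<^sup>+ z. ennreal (A (L z)) \<partial>JP) + \<dots>
      = (\<integral>\<^sup>+ z. ennreal (A (L z)) + ennreal (tilt l (- L z) / (1 + exp (L z))) \<partial>JP)"
    by (rule nn_integral_add[symmetric]) measurable
  also have "\<dots> \<le> (\<integral>\<^sup>+ z. 1 \<partial>JP)"
  proof (intro nn_integral_mono)
    fix z
    show "ennreal (A (L z)) + ennreal (tilt l (- L z) / (1 + exp (L z))) \<le> 1"
      using tilt_logistic_le_1[OF l, of "L z"] nonneg pos[of "L z"]
      by (simp add: A_def tilt_nonneg flip: ennreal_plus)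
  qed
  also have "\<dots> = 1"
    using prob_space.emeasure_space_1[OF prob_space_JP] by simp
  finally show ?thesis .
qed

lemma measurable_L_component:
  "i \<in> I \<Longrightarrow> (\<lambda>\<omega>. L (\<omega> i)) \<in> borel_measurable (PiM I (\<lambda>_. JP))"
  using measurable_compose[OF measurable_component_singleton[of i I "\<lambda>_. JP"] measurable_L_JP] .

lemma measurable_KLhat: "KLhat p n P Q j \<in> borel_measurable (PiM {..<n} (\<lambda>_. JP))"
  unfolding KLhat_def by (intro borel_measurable_sum measurable_L_component) simp

lemma measurable_sum_L_square:
  "(\<lambda>\<omega>. \<Sum>i<n. (L (\<omega> i))\<^sup>2) \<in> borel_measurable (PiM {..<n} (\<lambda>_. JP))"
  by (intro borel_measurable_sum borel_measurable_power measurable_L_component) simp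

lemma KLhat_self_normalized_tail:
  fixes n :: nat and \<delta> :: real
  assumes \<delta>: "0 \<le> \<delta>"
  shows "measure (PiM {..<n} (\<lambda>_. JP)) {\<omega> \<in> space (PiM {..<n} (\<lambda>_. JP)).
      real n * \<delta>\<^sup>2 / 2 + 2 * \<delta> * sqrt (real n * ln (real p)) < KLhat p n P Q j \<omega>
      \<and> (\<Sum>i<n. (L (\<omega> i))\<^sup>2) \<le> real n * \<delta>\<^sup>2} \<le> 1 / (real p)\<^sup>2"
    (is "measure _ ?S \<le> _")
proof -
  define V where "V = real n * \<delta>\<^sup>2"
  define t where "t = 2 * \<delta> * sqrt (real n * ln (real p))"
  have t: "0 \<le> t"
    using \<delta> j by (simp add: t_def)
  have S: "?S = {\<omega> \<in> space (PiM {..<n} (\<lambda>_. JP)).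
      V / 2 + t < (\<Sum>i<n. L (\<omega> i)) \<and> (\<Sum>i<n. (L (\<omega> i))\<^sup>2) \<le> V}"
    by (simp add: V_def t_def KLhat_def)
  show ?thesis
  proof (cases "V = 0")
    case True
    have "(\<Sum>i<n. L (\<omega> i)) = 0" if "(\<Sum>i<n. (L (\<omega> i))\<^sup>2) \<le> 0" for \<omega>
      using that sum_nonneg_eq_0_iff[of "{..<n}" "\<lambda>i. (L (\<omega> i))\<^sup>2"]
      by (simp add: order_antisym sum_nonneg)
    then have "?S = {}"
      unfolding S True using t by auto
    then have "measure (PiM {..<n} (\<lambda>_. JP)) ?S = 0"
      by (simp only: measure_empty)
    then show ?thesis
      by simp
  next
    case False
    then have V: "0 < V"
      by (simp add: V_def)
    then have "exp (- (t\<^sup>2 / (2 * V))) = 1 / (real p)\<^sup>2"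
      using exp_neg_threshold_exponent[of p n \<delta>] j by (simp add: V_def t_def)
    with measure_PiM_self_normalized_tail[OF prob_space_JP finite_lessThan[of n] measurable_L_JP
        nn_integral_tilt_L_le_1 V t]
    show ?thesis
      unfolding S by simp
  qed
qed

lemma KLhat_tail:
  fixes n :: nat and \<delta> :: real
  assumes "0 \<le> \<delta>" and E: "E \<in> sets (PiM {..<n} (\<lambda>_. JP))"
    and "\<And>\<omega>. \<omega> \<in> E \<Longrightarrow> (\<Sum>i<n. (L (\<omega> i))\<^sup>2) \<le> real n * \<delta>\<^sup>2"
  shows "measure (PiM {..<n} (\<lambda>_. JP)) ({\<omega> \<in> space (PiM {..<n} (\<lambda>_. JP)).
      real n * \<delta>\<^sup>2 / 2 + 2 * \<delta> * sqrt (real n * ln (real p)) < KLhat p n P Q j \<omega>} \<inter> E)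
    \<le> 1 / (real p)\<^sup>2"
proof -
  interpret prob_space "PiM {..<n} (\<lambda>_. JP)"
    using prob_space_JP by (rule prob_space_PiM)
  have "measure (PiM {..<n} (\<lambda>_. JP)) ({\<omega> \<in> space (PiM {..<n} (\<lambda>_. JP)).
      real n * \<delta>\<^sup>2 / 2 + 2 * \<delta> * sqrt (real n * ln (real p)) < KLhat p n P Q j \<omega>} \<inter> E)
    \<le> measure (PiM {..<n} (\<lambda>_. JP)) {\<omega> \<in> space (PiM {..<n} (\<lambda>_. JP)).
      real n * \<delta>\<^sup>2 / 2 + 2 * \<delta> * sqrt (real n * ln (real p)) < KLhat p n P Q j \<omega>
      \<and> (\<Sum>i<n. (L (\<omega> i))\<^sup>2) \<le> real n * \<delta>\<^sup>2}"
    using assms measurable_KLhat measurable_sum_L_square by (intro finite_measure_mono) auto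
  also have "\<dots> \<le> 1 / (real p)\<^sup>2"
    using KLhat_self_normalized_tail[OF assms(1)] .
  finally show ?thesis .
qed

end

theorem lemma6:
  fixes p n :: nat
    and \<delta> :: real
    and PX :: "(nat \<Rightarrow> real) measure"
    and \<nu> :: "nat \<Rightarrow> real measure"
    and P Q :: "nat \<Rightarrow> real \<Rightarrow> (nat \<Rightarrow> real) \<Rightarrow> real"
    and K :: "(nat \<Rightarrow> real) \<Rightarrow> (nat \<Rightarrow> real) measure"
  assumes p_pos: "1 \<le> p"
    and delta: "0 \<le> \<delta>"
    and PX: "prob_space PX" "sets PX = sets (Rp p)"
    and base: "\<And>j. j < p \<Longrightarrow> discrete_or_continuous (\<nu> j)"
    and P_dens: "\<And>j. j < p \<Longrightarrow> is_cond_density p j (\<nu> j) (P j)"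
    and P_true: "\<And>j. j < p \<Longrightarrow> has_conditional p j (\<nu> j) (P j) PX"
    and Q_dens: "\<And>j. j < p \<Longrightarrow> is_cond_density p j (\<nu> j) (Q j)"
    and same_support: "\<And>j t y. j < p \<Longrightarrow> (0 < P j t y \<longleftrightarrow> 0 < Q j t y)"
    and K_kernel: "K \<in> measurable (Rp p) (prob_algebra (Rp p))"
    and exch: "\<And>j. j < p \<Longrightarrow> pairwise_exchangeable p j (\<nu> j) (Q j) K"
  defines "Data \<equiv> PiM {..<n} (\<lambda>_. joint_law p PX K)"
    and "E \<equiv> {\<omega> \<in> space (PiM {..<n} (\<lambda>_. joint_law p PX K)). \<forall>j<p.
               (\<Sum>i<n. (llr p P Q j (fst (\<omega> i)) (snd (\<omega> i)))\<^sup>2) \<le> real n * \<delta>\<^sup>2}"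
  shows "measure Data {\<omega> \<in> space Data.
            Max ((\<lambda>j. KLhat p n P Q j \<omega>) ` {..<p})
              \<le> real n * \<delta>\<^sup>2 / 2 + 2 * \<delta> * sqrt (real n * ln (real p))}
         \<ge> 1 - 1 / real p - measure Data (space Data - E)"
proof -
  have coord: "knockoff_coordinate p j (\<nu> j) P Q PX K" if "j < p" for j
    using that by (intro knockoff_coordinate.intro PX base P_dens P_true Q_dens same_support K_kernel exch)
  interpret Data: prob_space Data
    unfolding Data_def by (intro prob_space_PiM prob_space_joint_law[OF K_kernel PX])
  have "0 \<in> {..<p}"
    using p_pos by simp
  then have "E = (\<Inter>j\<in>{..<p}. {\<omega> \<in> space Data. (\<Sum>i<n. (llr p P Q j (fst (\<omega> i)) (snd (\<omega> i)))\<^sup>2) \<le> real n * \<delta>\<^sup>2})"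
    unfolding E_def Data_def by blast
  also have "\<dots> \<in> Data.events"
  proof (intro sets.finite_INT)
    fix j
    assume "j \<in> {..<p}"
    then have [measurable]: "(\<lambda>\<omega>. \<Sum>i<n. (llr p P Q j (fst (\<omega> i)) (snd (\<omega> i)))\<^sup>2) \<in> borel_measurable Data"
      using knockoff_coordinate.measurable_sum_L_square[OF coord] by (simp add: Data_def)
    show "{\<omega> \<in> space Data. (\<Sum>i<n. (llr p P Q j (fst (\<omega> i)) (snd (\<omega> i)))\<^sup>2) \<le> real n * \<delta>\<^sup>2} \<in> Data.events"
      by measurable
  qed (use \<open>0 \<in> {..<p}\<close> in auto)
  finally have E: "E \<in> Data.events" .
  have "1 - card {..<p} * (1 / (real p)\<^sup>2) - Data.prob (space Data - E)
      \<le> Data.prob {\<omega> \<in> space Data. Max ((\<lambda>j. KLhat p n P Q j \<omega>) ` {..<p})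
          \<le> real n * \<delta>\<^sup>2 / 2 + 2 * \<delta> * sqrt (real n * ln (real p))}"
    using \<open>0 \<in> {..<p}\<close> knockoff_coordinate.measurable_KLhat[OF coord]
      knockoff_coordinate.KLhat_tail[OF coord delta E[unfolded Data_def]]
    by (intro Data.prob_Max_le_ge[OF _ _ _ E]) (auto simp: Data_def E_def)
  then show ?thesis
    using p_pos by (simp add: power2_eq_square)
qed

end
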